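(* Let $p$ be a prime, $d\ge 2$ and $n\ge 2p-1$. Let $N_p(\le n,p^d)=p^{d(n+1)}$ be the number of polynomials $a_nx^n+\cdots+a_1x+a_0$ with all $a_k\in\{0,\dots,p^d-1\}$, and let $N_{pp}(\le n,p^d)$ be the number of those which are permutation polynomials modulo $p^d$. Then $$\frac{N_{pp}(\le n,p^d)}{N_p(\le n,p^d)}=\frac{(p-1)^p\,(p-1)!}{p^{2p-1}}.$$
   Context: An integer polynomial $f$ is a permutation polynomial modulo $M$ if the map $x\mapsto f(x)\bmod M$ is a bijection of $\{0,\dots,M-1\}$. *)

theory Defs
  imports Complex_Main "HOL-Library.FuncSet" "HOL-Computational_Algebra.Primes"
begin

definition coeff_eval :: "nat \<Rightarrow> (nat \<Rightarrow> int) \<Rightarrow> int \<Rightarrow> int" where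
  "coeff_eval n a x = (\<Sum>k\<le>n. a k * x ^ k)"

definition is_perm_poly_mod :: "(int \<Rightarrow> int) \<Rightarrow> int \<Rightarrow> bool" where
  "is_perm_poly_mod f M = bij_betw (\<lambda>x. f x mod M) {0..<M} {0..<M}"

definition coeff_vectors :: "nat \<Rightarrow> int \<Rightarrow> (nat \<Rightarrow> int) set" where
  "coeff_vectors n M = {..n} \<rightarrow>\<^sub>E {0..<M}"

definition N_p :: "nat \<Rightarrow> int \<Rightarrow> nat" where
  "N_p n M = card (coeff_vectors n M)"

definition N_pp :: "nat \<Rightarrow> int \<Rightarrow> nat" where
  "N_pp n M = card {a \<in> coeff_vectors n M. is_perm_poly_mod (coeff_eval n a) M}"

end

theory Submission
  imports Defs "HOL-Computational_Algebra.Polynomial" "HOL-Number_Theory.Number_Theory"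
begin

text \<open>
  By the first-order Taylor expansion \<open>P (x + h) \<equiv> P x + h P' x (mod h\<^sup>2)\<close>, for \<open>d \<ge> 2\<close> a
  polynomial permutes the residues modulo \<open>p ^ d\<close> iff it permutes the residues modulo \<open>p\<close> and
  its derivative has no zero modulo \<open>p\<close>.  This depends only on the jet \<open>x \<mapsto> (P x, P' x) mod p\<close>
  on the residues, hence only on the coefficients modulo \<open>p\<close>, each of which has \<open>p ^ (d - 1)\<close>
  lifts.  For \<open>n \<ge> 2 p - 1\<close>, Hermite interpolation modulo \<open>p\<close> (correcting derivatives by
  multiples of \<open>X\<^sup>p - X\<close>) shows that, once the coefficients of degree \<open>\<ge> 2 p\<close> are fixed, the
  \<open>2 p\<close> low coefficients modulo \<open>p\<close> map bijectively onto all \<open>p ^ (2 p)\<close> jets, of which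
  \<open>p! (p - 1) ^ p\<close> are admissible.
\<close>

lemma dvd_poly_shift_diff:
  fixes P :: "'a::comm_ring_1 poly"
  shows "h dvd poly P (x + h) - poly P x"
proof (induction P)
  case (pCons a P)
  then obtain s where "poly P (x + h) - poly P x = h * s" by (elim dvdE)
  then have "poly (pCons a P) (x + h) - poly (pCons a P) x = h * (x * s + poly P (x + h))"
    by (simp add: algebra_simps)
  then show ?case by simp
qed simp

lemma sq_dvd_poly_shift_diff_pderiv:
  fixes P :: "'a::idom poly"
  shows "h\<^sup>2 dvd poly P (x + h) - poly P x - h * poly (pderiv P) x"
proof (induction P)
  case (pCons a P)
  obtain s where s: "poly P (x + h) - poly P x = h * s"
    using dvd_poly_shift_diff[of h P x] by (elim dvdE)
  obtain t where t: "poly P (x + h) - poly P x - h * poly (pderiv P) x = h\<^sup>2 * t"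
    using pCons.IH by (elim dvdE)
  have "poly (pCons a P) (x + h) - poly (pCons a P) x - h * poly (pderiv (pCons a P)) x
      = x * (poly P (x + h) - poly P x - h * poly (pderiv P) x) + h * (poly P (x + h) - poly P x)"
    by (simp add: pderiv_pCons algebra_simps)
  also have "\<dots> = h\<^sup>2 * (x * t + s)"
    using s t by (simp add: algebra_simps power2_eq_square)
  finally show ?case by simp
qed simp

lemma cong_poly:
  fixes P :: "'a::unique_euclidean_ring poly"
  assumes "[x = y] (mod m)"
  shows "[poly P x = poly P y] (mod m)"
proof -
  have "m dvd y - x"
    using assms by (simp add: cong_iff_dvd_diff dvd_diff_commute)
  also have "y - x dvd poly P y - poly P x"
    using dvd_poly_shift_diff[of "y - x" P x] by simp
  finally show ?thesis
    by (simp add: cong_iff_dvd_diff dvd_diff_commute)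
qed

lemma poly_arg_mod:
  fixes P :: "'a::unique_euclidean_ring poly"
  shows "poly P (x mod m) mod m = poly P x mod m"
  using cong_poly[of "x mod m" x m P] by (simp add: cong_def)

lemma dvd_poly_if_dvd_coeffs:
  fixes P :: "'a::comm_ring_1 poly"
  assumes "\<And>i. m dvd poly.coeff P i"
  shows "m dvd poly P x"
  using assms
proof (induction P)
  case (pCons a P)
  have "m dvd a" "\<And>i. m dvd poly.coeff P i"
    using pCons.prems[of 0] pCons.prems[of "Suc _"] by simp_all
  then show ?case using pCons.IH by simp
qed simp

section \<open>Permutation polynomials modulo prime powers\<close>

lemma is_perm_poly_mod_iff_inj_on:
  "is_perm_poly_mod f m \<longleftrightarrow> inj_on (\<lambda>x. f x mod m) {0..<m}"
proof -
  have "(\<lambda>x. f x mod m) ` {0..<m} \<subseteq> {0..<m}"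
    by (cases "m > 0") auto
  then show ?thesis
    unfolding is_perm_poly_mod_def bij_betw_def by (metis endo_inj_surj finite_atLeastLessThan_int)
qed

definition nonsingular_perm_poly_mod :: "int \<Rightarrow> int poly \<Rightarrow> bool" where
  "nonsingular_perm_poly_mod p P \<longleftrightarrow>
     is_perm_poly_mod (poly P) p \<and> (\<forall>x\<in>{0..<p}. \<not> p dvd poly (pderiv P) x)"

lemma nonsingular_perm_poly_mod_not_dvd_pderiv:
  assumes "p > 0" "nonsingular_perm_poly_mod p P"
  shows "\<not> p dvd poly (pderiv P) x"
proof
  assume "p dvd poly (pderiv P) x"
  then have "p dvd poly (pderiv P) (x mod p)"
    by (simp add: dvd_eq_mod_eq_0 poly_arg_mod)
  moreover have "x mod p \<in> {0..<p}"
    using assms(1) by simp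
  ultimately show False
    using assms(2) by (auto simp: nonsingular_perm_poly_mod_def)
qed

lemma nonsingular_perm_poly_mod_cong_cancel:
  assumes "prime p" "nonsingular_perm_poly_mod p P" "d > 0"
    and "[poly P x = poly P y] (mod p ^ d)"
  shows "[x = y] (mod p ^ d)"
  using assms(3,4)
proof (induction d arbitrary: x y rule: nat_induct_non_zero)
  case 1
  have p_pos: "p > 0"
    using assms(1) prime_gt_0_int by blast
  have "poly P (x mod p) mod p = poly P (y mod p) mod p"
    using "1.prems" by (simp add: poly_arg_mod cong_def)
  moreover have "inj_on (\<lambda>x. poly P x mod p) {0..<p}"
    using assms(2) by (simp add: nonsingular_perm_poly_mod_def is_perm_poly_mod_iff_inj_on)
  moreover have "x mod p \<in> {0..<p}" "y mod p \<in> {0..<p}"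
    using p_pos by simp_all
  ultimately have "x mod p = y mod p"
    by (metis inj_onD)
  then show ?case
    by (simp add: cong_def)
next
  case (Suc d)
  have "[poly P x = poly P y] (mod p ^ d)"
    using Suc.prems by (rule cong_dvd_modulus) (simp add: le_imp_power_dvd)
  then have "[x = y] (mod p ^ d)"
    by (rule Suc.IH)
  then obtain u where u: "y - x = p ^ d * u"
    by (metis cong_iff_dvd_diff cong_sym dvdE)
  \<comment> \<open>\<open>(y - x)\<^sup>2\<close> vanishes modulo \<open>p ^ Suc d\<close>, so only the linear Taylor term survives.\<close>
  have "p ^ Suc d dvd p ^ (d * 2)"
    using Suc.hyps by (intro le_imp_power_dvd) simp
  also have "\<dots> dvd (y - x)\<^sup>2"
    by (simp add: u power_mult_distrib power_mult)
  also have "\<dots> dvd poly P y - poly P x - (y - x) * poly (pderiv P) x"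
    using sq_dvd_poly_shift_diff_pderiv[of "y - x" P x] by simp
  finally have taylor: "p ^ Suc d dvd poly P y - poly P x - (y - x) * poly (pderiv P) x" .
  have "p ^ Suc d dvd poly P y - poly P x"
    using Suc.prems by (simp add: cong_iff_dvd_diff dvd_diff_commute)
  from dvd_diff[OF this taylor] have "p ^ Suc d dvd (y - x) * poly (pderiv P) x"
    by simp
  moreover have "coprime (p ^ Suc d) (poly (pderiv P) x)"
    using assms prime_gt_0_int nonsingular_perm_poly_mod_not_dvd_pderiv by (simp add: prime_imp_coprime)
  ultimately have "p ^ Suc d dvd y - x"
    by (simp add: coprime_dvd_mult_left_iff)
  then show ?case
    by (simp add: cong_iff_dvd_diff dvd_diff_commute)
qed

lemma is_perm_poly_mod_prime_power:
  assumes "prime p" "d > 0" "nonsingular_perm_poly_mod p P"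
  shows "is_perm_poly_mod (poly P) (p ^ d)"
  unfolding is_perm_poly_mod_iff_inj_on
proof (rule inj_onI)
  fix x y assume xy: "x \<in> {0..<p ^ d}" "y \<in> {0..<p ^ d}" "poly P x mod p ^ d = poly P y mod p ^ d"
  then have "[poly P x = poly P y] (mod p ^ d)"
    by (simp add: cong_def)
  then have "[x = y] (mod p ^ d)"
    by (rule nonsingular_perm_poly_mod_cong_cancel[OF assms(1,3,2)])
  then show "x = y"
    using xy(1,2) by (simp add: cong_def)
qed

lemma is_perm_poly_mod_dvd_modulus:
  fixes P :: "int poly"
  assumes "is_perm_poly_mod (poly P) M" "m dvd M" "0 < m" "0 < M"
  shows "is_perm_poly_mod (poly P) m"
proof -
  have "{0..<m} \<subseteq> (\<lambda>x. poly P x mod m) ` {0..<m}"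
  proof
    fix z assume z: "z \<in> {0..<m}"
    moreover have "m \<le> M"
      using assms(2,4) by (rule zdvd_imp_le)
    ultimately have "z \<in> (\<lambda>x. poly P x mod M) ` {0..<M}"
      using assms(1) unfolding is_perm_poly_mod_def bij_betw_def by auto
    then obtain x where x: "z = poly P x mod M"
      by blast
    have "poly P (x mod m) mod m = poly P x mod M mod m"
      using assms(2) by (simp add: poly_arg_mod mod_mod_cancel)
    also have "\<dots> = z"
      using x z by simp
    finally have "z = poly P (x mod m) mod m" ..
    moreover have "x mod m \<in> {0..<m}"
      using assms(3) by simp
    ultimately show "z \<in> (\<lambda>x. poly P x mod m) ` {0..<m}"
      by blast
  qed
  then have "(\<lambda>x. poly P x mod m) ` {0..<m} = {0..<m}"
    using assms(3) by auto
  then show ?thesis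
    unfolding is_perm_poly_mod_def bij_betw_def by (simp add: eq_card_imp_inj_on)
qed

lemma not_dvd_pderiv_if_is_perm_poly_mod:
  assumes "prime p" "d \<ge> 2" "is_perm_poly_mod (poly P) (p ^ d)" "x \<in> {0..<p}"
  shows "\<not> p dvd poly (pderiv P) x"
proof
  assume dvd_pderiv: "p dvd poly (pderiv P) x"
  define h where "h = p ^ (d - 1)"
  have p_ge_2: "p \<ge> 2"
    using assms(1) prime_ge_2_int by blast
  have h_pos: "h > 0"
    unfolding h_def using p_ge_2 by simp
  have p_pow_d: "p ^ d = h * p"
    unfolding h_def using assms(2) by (simp add: power_eq_if)
  \<comment> \<open>\<open>h\<^sup>2\<close> vanishes modulo \<open>p ^ d\<close>, so \<open>P (x + h) \<equiv> P x + h P' x \<equiv> P x\<close>.\<close>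
  have "p ^ d dvd h\<^sup>2"
    unfolding h_def power_mult[symmetric] using assms(2) by (intro le_imp_power_dvd) simp
  also have "\<dots> dvd poly P (x + h) - poly P x - h * poly (pderiv P) x"
    by (rule sq_dvd_poly_shift_diff_pderiv)
  finally have taylor: "p ^ d dvd poly P (x + h) - poly P x - h * poly (pderiv P) x" .
  have "p ^ d dvd h * poly (pderiv P) x"
    unfolding p_pow_d using dvd_pderiv by (rule mult_dvd_mono[OF dvd_refl])
  from dvd_add[OF taylor this] have "poly P (x + h) mod p ^ d = poly P x mod p ^ d"
    by (simp add: mod_eq_dvd_iff)
  moreover have "x + h \<in> {0..<p ^ d}" "x \<in> {0..<p ^ d}"
  proof -
    have "p \<le> h"
      unfolding h_def using assms(2) p_ge_2 by (intro self_le_power) auto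
    moreover have "2 * h \<le> h * p"
      using p_ge_2 h_pos by simp
    ultimately show "x + h \<in> {0..<p ^ d}" "x \<in> {0..<p ^ d}"
      using assms(4) h_pos unfolding p_pow_d atLeastLessThan_iff by linarith+
  qed
  moreover have "inj_on (\<lambda>x. poly P x mod p ^ d) {0..<p ^ d}"
    using assms(3) unfolding is_perm_poly_mod_def bij_betw_def ..
  ultimately have "x + h = x"
    by (elim inj_onD)
  then show False
    using h_pos by simp
qed

lemma is_perm_poly_mod_prime_power_iff:
  assumes "prime p" "d \<ge> 2"
  shows "is_perm_poly_mod (poly P) (p ^ d) \<longleftrightarrow> nonsingular_perm_poly_mod p P"
proof
  assume perm: "is_perm_poly_mod (poly P) (p ^ d)"
  have "p > 0"
    using assms(1) prime_gt_0_int by blast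
  moreover have "p dvd p ^ d"
    using assms(2) by (simp add: dvd_power)
  ultimately have "is_perm_poly_mod (poly P) p"
    using is_perm_poly_mod_dvd_modulus[OF perm] by simp
  then show "nonsingular_perm_poly_mod p P"
    using not_dvd_pderiv_if_is_perm_poly_mod[OF assms perm]
    unfolding nonsingular_perm_poly_mod_def by blast
next
  assume "nonsingular_perm_poly_mod p P"
  then show "is_perm_poly_mod (poly P) (p ^ d)"
    using is_perm_poly_mod_prime_power[OF assms(1)] assms(2) by simp
qed

section \<open>Coefficient vectors and jets\<close>

definition poly_of_coeffs :: "nat set \<Rightarrow> (nat \<Rightarrow> 'a::comm_monoid_add) \<Rightarrow> 'a poly" where
  "poly_of_coeffs A a = (\<Sum>k\<in>A. Polynomial.monom (a k) k)"

lemma coeff_poly_of_coeffs: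
  "finite A \<Longrightarrow> poly.coeff (poly_of_coeffs A a) i = (if i \<in> A then a i else 0)"
  by (simp add: poly_of_coeffs_def coeff_sum coeff_monom)

lemma coeff_eval_eq_poly: "coeff_eval n a = poly (poly_of_coeffs {..n} a)"
  by (simp add: fun_eq_iff coeff_eval_def poly_of_coeffs_def poly_sum poly_monom)

definition jet_mod :: "int \<Rightarrow> int poly \<Rightarrow> (int \<Rightarrow> int) \<times> (int \<Rightarrow> int)" where
  "jet_mod q P = (restrict (\<lambda>x. poly P x mod q) {0..<q}, restrict (\<lambda>x. poly (pderiv P) x mod q) {0..<q})"

lemma jet_mod_mem_funcset:
  "q > 0 \<Longrightarrow> jet_mod q P \<in> ({0..<q} \<rightarrow>\<^sub>E {0..<q}) \<times> ({0..<q} \<rightarrow>\<^sub>E {0..<q})"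
  by (auto simp: jet_mod_def)

lemma jet_mod_cong_coeffs:
  assumes "\<And>i. [poly.coeff P i = poly.coeff Q i] (mod q)"
  shows "jet_mod q P = jet_mod q Q"
proof -
  have coeffs: "q dvd poly.coeff (P - Q) i" for i
    using assms by (simp add: cong_iff_dvd_diff)
  have "q dvd poly (P - Q) x" for x
    using coeffs by (rule dvd_poly_if_dvd_coeffs)
  moreover have "q dvd poly (pderiv (P - Q)) x" for x
    by (rule dvd_poly_if_dvd_coeffs) (simp only: coeff_pderiv dvd_mult coeffs)
  ultimately show ?thesis
    unfolding jet_mod_def by (auto intro!: restrict_ext simp: mod_eq_dvd_iff pderiv_diff)
qed

lemma jet_mod_eqI:
  assumes "v \<in> {0..<q} \<rightarrow>\<^sub>E {0..<q}" "w \<in> {0..<q} \<rightarrow>\<^sub>E {0..<q}"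
    and "\<And>x. x \<in> {0..<q} \<Longrightarrow> [poly P x = v x] (mod q)"
    and "\<And>x. x \<in> {0..<q} \<Longrightarrow> [poly (pderiv P) x = w x] (mod q)"
  shows "jet_mod q P = (v, w)"
proof -
  have "v x \<in> {0..<q}" "w x \<in> {0..<q}" if "x \<in> {0..<q}" for x
    using assms(1,2) that by (auto dest: PiE_mem)
  then have "restrict (\<lambda>x. poly P x mod q) {0..<q} = restrict v {0..<q}"
    "restrict (\<lambda>x. poly (pderiv P) x mod q) {0..<q} = restrict w {0..<q}"
    using assms(3,4) by (auto intro!: restrict_ext simp: cong_def)
  then show ?thesis
    using assms(1,2) by (simp add: jet_mod_def)
qed

definition perm_jets :: "int \<Rightarrow> ((int \<Rightarrow> int) \<times> (int \<Rightarrow> int)) set" where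
  "perm_jets q = {v \<in> {0..<q} \<rightarrow>\<^sub>E {0..<q}. inj_on v {0..<q}} \<times> ({0..<q} \<rightarrow>\<^sub>E {1..<q})"

lemma perm_jets_subset: "perm_jets q \<subseteq> ({0..<q} \<rightarrow>\<^sub>E {0..<q}) \<times> ({0..<q} \<rightarrow>\<^sub>E {0..<q})"
proof -
  have "{0..<q} \<rightarrow>\<^sub>E {1..<q} \<subseteq> {0..<q} \<rightarrow>\<^sub>E {0..<q}"
    by (rule PiE_mono) auto
  then show ?thesis
    unfolding perm_jets_def by blast
qed

lemma card_perm_jets:
  assumes "q \<ge> 0"
  shows "card (perm_jets q) = fact (nat q) * (nat q - 1) ^ nat q"
proof -
  have "card {v \<in> {0..<q} \<rightarrow>\<^sub>E {0..<q}. inj_on v {0..<q}} = fact (nat q)"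
    by (simp add: card_inj_on_subset_funcset fact_prod_rev)
  moreover have "card ({0..<q} \<rightarrow>\<^sub>E {1..<q}) = (nat q - 1) ^ nat q"
    using assms by (simp add: card_funcsetE nat_diff_distrib')
  ultimately show ?thesis
    by (simp add: perm_jets_def card_cartesian_product)
qed

lemma nonsingular_perm_poly_mod_iff_jet_mod:
  assumes "q > 0"
  shows "nonsingular_perm_poly_mod q P \<longleftrightarrow> jet_mod q P \<in> perm_jets q"
proof -
  have "inj_on (\<lambda>x. poly P x mod q) {0..<q} \<longleftrightarrow> inj_on (restrict (\<lambda>x. poly P x mod q) {0..<q}) {0..<q}"
    by (rule inj_on_cong) simp
  moreover have "\<not> q dvd y \<longleftrightarrow> y mod q \<in> {1..<q}" for y
  proof -
    have "0 \<le> y mod q" "y mod q < q"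
      using assms by simp_all
    then show ?thesis
      by (auto simp: dvd_eq_mod_eq_0)
  qed
  ultimately show ?thesis
    using assms by (auto simp: nonsingular_perm_poly_mod_def is_perm_poly_mod_iff_inj_on jet_mod_def perm_jets_def)
qed

lemma card_filter_eq_sum_card_fibres:
  assumes "finite A" "finite B" "g ` A \<subseteq> B"
  shows "card {a \<in> A. Q a} = (\<Sum>b\<in>B. card {a \<in> A. g a = b \<and> Q a})"
proof -
  have "(\<Sum>b\<in>B. card {a \<in> A. g a = b \<and> Q a}) = (\<Sum>b\<in>B. \<Sum>a | a \<in> {a \<in> A. Q a} \<and> g a = b. 1)"
    by (intro sum.cong) (auto intro: arg_cong[where f = card])
  also have "\<dots> = card {a \<in> A. Q a}"
    using assms by (subst sum.group) auto
  finally show ?thesis ..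
qed

lemma card_preimage_bij_betw:
  assumes "bij_betw f A B" "S \<subseteq> B"
  shows "card {a \<in> A. f a \<in> S} = card S"
proof -
  have "f ` {a \<in> A. f a \<in> S} = S"
    using assms unfolding bij_betw_def by blast
  then have "bij_betw f {a \<in> A. f a \<in> S} S"
    by (intro bij_betw_subset[OF assms(1)]) auto
  then show ?thesis
    by (rule bij_betw_same_card)
qed

lemma card_residue_class:
  fixes m k r :: int
  assumes "0 \<le> r" "r < m" "0 \<le> k"
  shows "card {x \<in> {0..<m * k}. x mod m = r} = nat k"
proof -
  have "{x \<in> {0..<m * k}. x mod m = r} = (\<lambda>j. r + m * j) ` {0..<k}"
  proof (intro equalityI subsetI)
    fix x assume "x \<in> {x \<in> {0..<m * k}. x mod m = r}"
    then have x: "0 \<le> x" "x < m * k" "x mod m = r"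
      by simp_all
    then have x_eq: "x = r + m * (x div m)"
      by (metis mod_mult_div_eq)
    have "0 \<le> x div m"
      using x assms by (simp add: pos_imp_zdiv_nonneg_iff)
    moreover have "x div m < k"
    proof (rule ccontr)
      assume "\<not> x div m < k"
      then have "m * k \<le> m * (x div m)"
        using assms by (intro mult_left_mono) auto
      then show False
        using x x_eq assms(1) by linarith
    qed
    ultimately show "x \<in> (\<lambda>j. r + m * j) ` {0..<k}"
      using x_eq by (intro image_eqI[where f = "\<lambda>j. r + m * j"]) simp_all
  next
    fix x assume "x \<in> (\<lambda>j. r + m * j) ` {0..<k}"
    then obtain j where x_eq: "x = r + m * j" and "j \<in> {0..<k}"
      by (rule imageE)
    then have j: "0 \<le> j" "j < k"
      by simp_all
    have "m * j \<le> m * (k - 1)"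
      using j assms by (intro mult_left_mono) auto
    moreover have "0 \<le> m * j"
      using j assms by simp
    moreover have "x mod m = r"
      using assms by (simp add: x_eq)
    ultimately show "x \<in> {x \<in> {0..<m * k}. x mod m = r}"
      using x_eq assms by (simp add: right_diff_distrib)
  qed
  moreover have "inj_on (\<lambda>j. r + m * j) {0..<k}"
    using assms by (intro inj_onI) simp
  ultimately show ?thesis
    by (simp add: card_image)
qed

lemma finite_coeff_vectors: "finite (coeff_vectors n m)"
  by (simp add: coeff_vectors_def finite_PiE)

lemma card_coeff_vectors_mod_fibre:
  fixes m k :: int
  assumes "m > 0" "k \<ge> 0" "b \<in> coeff_vectors n m"
  shows "card {a \<in> coeff_vectors n (m * k). restrict (\<lambda>i. a i mod m) {..n} = b} = nat k ^ Suc n"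
proof -
  have b: "b i \<in> {0..<m}" if "i \<le> n" for i
    using assms(3) that unfolding coeff_vectors_def by auto
  have "{a \<in> coeff_vectors n (m * k). restrict (\<lambda>i. a i mod m) {..n} = b}
      = (\<Pi>\<^sub>E i\<in>{..n}. {x \<in> {0..<m * k}. x mod m = b i})"
    using assms(3) unfolding coeff_vectors_def by (fastforce simp: PiE_iff fun_eq_iff extensional_def)
  also have "card \<dots> = (\<Prod>i\<le>n. card {x \<in> {0..<m * k}. x mod m = b i})"
    by (rule card_PiE) simp
  also have "\<dots> = (\<Prod>i\<le>n. nat k)"
    by (intro prod.cong refl card_residue_class) (use b assms(2) in auto)
  finally show ?thesis
    by simp
qed

lemma card_coeff_vectors_lift:
  fixes m k :: int
  assumes "m > 0" "k \<ge> 0"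
    and "\<And>a b. (\<And>i. i \<le> n \<Longrightarrow> [a i = b i] (mod m)) \<Longrightarrow> Q a \<longleftrightarrow> Q b"
  shows "card {a \<in> coeff_vectors n (m * k). Q a} = card {b \<in> coeff_vectors n m. Q b} * nat k ^ Suc n"
proof -
  define red where "red a = restrict (\<lambda>i. a i mod m) {..n}" for a :: "nat \<Rightarrow> int"
  have red_maps: "red ` coeff_vectors n (m * k) \<subseteq> coeff_vectors n m"
    using assms(1) unfolding red_def coeff_vectors_def by auto
  have "Q a \<longleftrightarrow> Q b" if "red a = b" for a b
    using assms(3)[of a b] that by (auto simp: red_def cong_def)
  then have fibre: "{a \<in> coeff_vectors n (m * k). red a = b \<and> Q a}
      = (if Q b then {a \<in> coeff_vectors n (m * k). red a = b} else {})" for b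
    by auto
  have card_fibre: "card {a \<in> coeff_vectors n (m * k). red a = b} = nat k ^ Suc n"
    if "b \<in> coeff_vectors n m" for b
    unfolding red_def using assms(1,2) that by (rule card_coeff_vectors_mod_fibre)
  have "card {a \<in> coeff_vectors n (m * k). Q a}
      = (\<Sum>b\<in>coeff_vectors n m. card {a \<in> coeff_vectors n (m * k). red a = b \<and> Q a})"
    by (rule card_filter_eq_sum_card_fibres[OF finite_coeff_vectors finite_coeff_vectors red_maps])
  also have "\<dots> = (\<Sum>b\<in>coeff_vectors n m. if Q b then nat k ^ Suc n else 0)"
    by (intro sum.cong) (simp_all add: fibre card_fibre)
  also have "\<dots> = card {b \<in> coeff_vectors n m. Q b} * nat k ^ Suc n"
    by (simp add: sum.inter_filter[symmetric] finite_coeff_vectors)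
  finally show ?thesis .
qed

section \<open>Hermite interpolation modulo a prime\<close>

lemma fermat_theorem_int:
  fixes a :: int
  assumes "prime p" "\<not> int p dvd a"
  shows "[a ^ (p - 1) = 1] (mod int p)"
proof -
  define b where "b = nat (a mod int p)"
  have b: "int b = a mod int p"
    using assms(1) prime_gt_0_nat unfolding b_def by simp
  have "\<not> p dvd b"
  proof
    assume "p dvd b"
    then have "int p dvd a mod int p"
      by (simp flip: b)
    with assms(2) show False
      by (simp add: dvd_mod_iff)
  qed
  with assms(1) have "[b ^ (p - 1) = 1] (mod p)"
    by (rule fermat_theorem)
  then have "[(a mod int p) ^ (p - 1) = 1] (mod int p)"
    by (metis b cong_int_iff of_nat_1 of_nat_power)
  moreover have "[a ^ (p - 1) = (a mod int p) ^ (p - 1)] (mod int p)"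
    by (intro cong_pow) (simp add: cong_def)
  ultimately show ?thesis
    using cong_trans by blast
qed

lemma prime_dvd_power_self_diff:
  fixes c :: int
  assumes "prime p"
  shows "int p dvd c ^ p - c"
proof (cases "int p dvd c")
  case True
  then show ?thesis
    using assms prime_gt_0_nat by (simp add: dvd_power_iff_le dvd_trans[OF True])
next
  case False
  then have "[c * c ^ (p - 1) = c * 1] (mod int p)"
    using assms by (intro cong_scalar_left fermat_theorem_int)
  then have "[c ^ p = c] (mod int p)"
    using assms prime_gt_0_nat by (simp add: power_eq_if)
  then show ?thesis
    by (simp add: cong_iff_dvd_diff)
qed

lemma fermat_indicator:
  assumes "prime p" "x \<in> {0..<int p}" "c \<in> {0..<int p}"
  shows "[1 - (x - c) ^ (p - 1) = (if x = c then 1 else 0)] (mod int p)"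
proof (cases "x = c")
  case True
  moreover have "p - 1 > 0"
    using prime_ge_2_nat[OF assms(1)] by simp
  ultimately show ?thesis
    by (simp add: zero_power)
next
  case False
  have "\<not> int p dvd x - c"
  proof
    assume "int p dvd x - c"
    then have "x mod int p = c mod int p"
      by (simp add: mod_eq_dvd_iff)
    with assms(2,3) False show False
      by simp
  qed
  then have "[1 - (x - c) ^ (p - 1) = 1 - 1] (mod int p)"
    using assms(1) by (intro cong_diff cong_refl fermat_theorem_int)
  then show ?thesis
    using False by simp
qed

lemma interpolation_mod_prime:
  fixes V :: "int \<Rightarrow> int"
  assumes "prime p"
  obtains G :: "int poly"
  where "degree G \<le> p - 1" "\<And>x. x \<in> {0..<int p} \<Longrightarrow> [poly G x = V x] (mod int p)"
proof
  define G where "G = (\<Sum>c\<in>{0..<int p}. Polynomial.smult (V c) (1 - [:-c, 1:] ^ (p - 1)))"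
  show "degree G \<le> p - 1"
    unfolding G_def
    by (intro degree_sum_le order.trans[OF degree_smult_le] degree_diff_le) (simp_all add: degree_linear_power)
  show "[poly G x = V x] (mod int p)" if x: "x \<in> {0..<int p}" for x
  proof -
    have "poly G x = (\<Sum>c\<in>{0..<int p}. V c * (1 - (x - c) ^ (p - 1)))"
      by (simp add: G_def poly_sum)
    also have "[\<dots> = (\<Sum>c\<in>{0..<int p}. if x = c then V c else 0)] (mod int p)"
    proof (rule cong_sum)
      fix c assume "c \<in> {0..<int p}"
      have "[V c * (1 - (x - c) ^ (p - 1)) = V c * (if x = c then 1 else 0)] (mod int p)"
        by (intro cong_scalar_left fermat_indicator[OF assms x \<open>c \<in> {0..<int p}\<close>])
      then show "[V c * (1 - (x - c) ^ (p - 1)) = (if x = c then V c else 0)] (mod int p)"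
        by (cases "x = c") simp_all
    qed
    also have "(\<Sum>c\<in>{0..<int p}. if x = c then V c else 0) = V x"
      using x by simp
    finally show ?thesis .
  qed
qed

lemma hermite_interpolation_mod_prime:
  fixes V W :: "int \<Rightarrow> int"
  assumes "prime p"
  obtains P :: "int poly"
  where "degree P < 2 * p"
    "\<And>x. x \<in> {0..<int p} \<Longrightarrow> [poly P x = V x] (mod int p)"
    "\<And>x. x \<in> {0..<int p} \<Longrightarrow> [poly (pderiv P) x = W x] (mod int p)"
proof -
  have p_ge_2: "p \<ge> 2"
    using prime_ge_2_nat[OF assms] .
  obtain G where G: "degree G \<le> p - 1" "\<And>x. x \<in> {0..<int p} \<Longrightarrow> [poly G x = V x] (mod int p)"
    using interpolation_mod_prime[OF assms, where V = V] by blast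
  obtain H where H: "degree H \<le> p - 1"
    "\<And>x. x \<in> {0..<int p} \<Longrightarrow> [poly H x = poly (pderiv G) x - W x] (mod int p)"
    using interpolation_mod_prime[OF assms, where V = "\<lambda>x. poly (pderiv G) x - W x"] by blast
  \<comment> \<open>\<open>X\<^sup>p - X\<close> vanishes modulo \<open>p\<close> at every integer while its derivative is \<open>\<equiv> -1\<close>,
      so adding \<open>(X\<^sup>p - X) H\<close> to \<open>G\<close> corrects the derivatives and keeps the values.\<close>
  define X :: "int poly" where "X = Polynomial.monom 1 p - [:0, 1:]"
  define P where "P = G + X * H"
  show ?thesis
  proof (rule that)
    have "degree X \<le> p"
      unfolding X_def using p_ge_2 by (intro degree_diff_le) (simp_all add: degree_monom_le)
    then have "degree (X * H) \<le> p + (p - 1)"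
      using degree_mult_le[of X H] H(1) by linarith
    then have "degree P \<le> p + (p - 1)"
      unfolding P_def using G(1) by (intro degree_add_le) simp_all
    then show "degree P < 2 * p"
      using p_ge_2 by linarith
  next
    fix x assume x: "x \<in> {0..<int p}"
    have X_root: "int p dvd x ^ p - x"
      using assms by (rule prime_dvd_power_self_diff)
    have "poly P x = poly G x + (x ^ p - x) * poly H x"
      by (simp add: P_def X_def poly_monom)
    then have "[poly P x = poly G x] (mod int p)"
      using X_root by (simp add: cong_iff_dvd_diff)
    then show "[poly P x = V x] (mod int p)"
      using G(2)[OF x] by (rule cong_trans)
  next
    fix x assume x: "x \<in> {0..<int p}"
    have X_root: "int p dvd x ^ p - x"
      using assms by (rule prime_dvd_power_self_diff)
    have H_x: "int p dvd poly (pderiv G) x - W x - poly H x"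
      using H(2)[OF x] by (simp add: cong_iff_dvd_diff dvd_diff_commute)
    have "poly (pderiv P) x - W x
        = (x ^ p - x) * poly (pderiv H) x + int p * (x ^ (p - 1) * poly H x)
          + (poly (pderiv G) x - W x - poly H x)"
      by (simp add: P_def X_def pderiv_add pderiv_mult pderiv_diff pderiv_monom pderiv_pCons poly_monom algebra_simps)
    also have "int p dvd \<dots>"
      using X_root H_x by (intro dvd_add dvd_mult2) simp_all
    finally show "[poly (pderiv P) x = W x] (mod int p)"
      by (simp add: cong_iff_dvd_diff)
  qed
qed

section \<open>Jets of polynomials with prescribed high coefficients\<close>

lemma card_coeff_vectors_fixed_tail:
  fixes q :: int
  assumes "q \<ge> 0" "L \<le> Suc n" "h \<in> {L..n} \<rightarrow>\<^sub>E {0..<q}"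
  shows "card {a \<in> coeff_vectors n q. restrict a {L..n} = h} = nat q ^ L"
proof -
  have h: "h i \<in> {0..<q}" if "i \<in> {L..n}" for i
    using assms(3) that by (rule PiE_mem)
  have "{a \<in> coeff_vectors n q. restrict a {L..n} = h}
      = (\<Pi>\<^sub>E i\<in>{..n}. if i < L then {0..<q} else {h i})"
  proof (intro equalityI subsetI)
    fix a assume "a \<in> {a \<in> coeff_vectors n q. restrict a {L..n} = h}"
    then have a: "a \<in> {..n} \<rightarrow>\<^sub>E {0..<q}" "restrict a {L..n} = h"
      by (simp_all add: coeff_vectors_def)
    have "a i = h i" if "i \<in> {L..n}" for i
      using that by (simp flip: a(2))
    with a(1) show "a \<in> (\<Pi>\<^sub>E i\<in>{..n}. if i < L then {0..<q} else {h i})"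
      by (auto simp: PiE_iff not_less)
  next
    fix a assume a: "a \<in> (\<Pi>\<^sub>E i\<in>{..n}. if i < L then {0..<q} else {h i})"
    have tail: "a i = h i" if "i \<in> {L..n}" for i
      using PiE_mem[OF a, of i] that by simp
    have "a i \<in> {0..<q}" if "i \<in> {..n}" for i
    proof (cases "i < L")
      case True
      then show ?thesis
        using PiE_mem[OF a that] by simp
    next
      case False
      then show ?thesis
        using that tail h by simp
    qed
    then have "a \<in> coeff_vectors n q"
      using a unfolding coeff_vectors_def by (auto simp: PiE_iff)
    moreover have "restrict a {L..n} = restrict h {L..n}"
      using tail by (rule restrict_ext)
    then have "restrict a {L..n} = h"
      using assms(3) by simp
    ultimately show "a \<in> {a \<in> coeff_vectors n q. restrict a {L..n} = h}"
      by simp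
  qed
  also have "card \<dots> = (\<Prod>i\<le>n. if i < L then nat q else 1)"
    by (subst card_PiE) (auto intro!: prod.cong)
  also have "\<dots> = nat q ^ card {i \<in> {..n}. i < L}"
    by (simp add: prod.inter_filter[symmetric])
  also have "{i \<in> {..n}. i < L} = {..<L}"
    using assms(2) by auto
  finally show ?thesis
    by (simp only: card_lessThan)
qed

lemma jet_mod_fixed_tail_surj:
  fixes p :: nat
  assumes "prime p" "2 * p \<le> Suc n" "h \<in> {2 * p..n} \<rightarrow>\<^sub>E {0..<int p}"
    and "v \<in> {0..<int p} \<rightarrow>\<^sub>E {0..<int p}" "w \<in> {0..<int p} \<rightarrow>\<^sub>E {0..<int p}"
  obtains a where "a \<in> coeff_vectors n p" "restrict a {2 * p..n} = h"
    "jet_mod p (poly_of_coeffs {..n} a) = (v, w)"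
proof -
  define H where "H = poly_of_coeffs {2 * p..n} h"
  obtain P where P: "degree P < 2 * p"
    "\<And>x. x \<in> {0..<int p} \<Longrightarrow> [poly P x = v x - poly H x] (mod int p)"
    "\<And>x. x \<in> {0..<int p} \<Longrightarrow> [poly (pderiv P) x = w x - poly (pderiv H) x] (mod int p)"
    using hermite_interpolation_mod_prime[OF assms(1),
        where V = "\<lambda>x. v x - poly H x" and W = "\<lambda>x. w x - poly (pderiv H) x"] by blast
  define a where "a = restrict (\<lambda>i. if i < 2 * p then poly.coeff P i mod p else h i) {..n}"
  have p_pos: "int p > 0"
    using assms(1) prime_gt_0_nat by simp
  show ?thesis
  proof (rule that)
    show "a \<in> coeff_vectors n p"
      using p_pos PiE_mem[OF assms(3)] by (auto simp: a_def coeff_vectors_def)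
    have "restrict a {2 * p..n} = restrict h {2 * p..n}"
      by (rule restrict_ext) (simp add: a_def)
    then show "restrict a {2 * p..n} = h"
      using assms(3) by simp
    have "[poly.coeff (poly_of_coeffs {..n} a) i = poly.coeff (P + H) i] (mod int p)" for i
    proof -
      have "poly.coeff P i = 0" if "i \<ge> 2 * p"
        using P(1) that by (simp add: coeff_eq_0)
      then show ?thesis
        using assms(2) by (auto simp: a_def H_def coeff_poly_of_coeffs cong_def)
    qed
    then have "jet_mod p (poly_of_coeffs {..n} a) = jet_mod p (P + H)"
      by (rule jet_mod_cong_coeffs)
    also have "\<dots> = (v, w)"
    proof (rule jet_mod_eqI[OF assms(4,5)])
      fix x assume x: "x \<in> {0..<int p}"
      show "[poly (P + H) x = v x] (mod int p)"
        using P(2)[OF x] by (simp add: cong_iff_dvd_diff algebra_simps)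
      show "[poly (pderiv (P + H)) x = w x] (mod int p)"
        using P(3)[OF x] by (simp add: pderiv_add cong_iff_dvd_diff algebra_simps)
    qed
    finally show "jet_mod p (poly_of_coeffs {..n} a) = (v, w)" .
  qed
qed

lemma bij_betw_jet_mod_fixed_tail:
  fixes p :: nat
  assumes "prime p" "2 * p \<le> Suc n" "h \<in> {2 * p..n} \<rightarrow>\<^sub>E {0..<int p}"
  shows "bij_betw (\<lambda>a. jet_mod p (poly_of_coeffs {..n} a))
           {a \<in> coeff_vectors n p. restrict a {2 * p..n} = h}
           (({0..<int p} \<rightarrow>\<^sub>E {0..<int p}) \<times> ({0..<int p} \<rightarrow>\<^sub>E {0..<int p}))"
    (is "bij_betw ?jet ?A (?F \<times> ?F)")
proof -
  have "?jet ` ?A \<subseteq> ?F \<times> ?F"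
    using prime_gt_0_nat[OF assms(1)] by (intro image_subsetI jet_mod_mem_funcset) simp
  moreover have "?F \<times> ?F \<subseteq> ?jet ` ?A"
  proof
    fix vw assume "vw \<in> ?F \<times> ?F"
    then obtain v w where vw: "vw = (v, w)" "v \<in> ?F" "w \<in> ?F"
      by blast
    obtain a where a: "a \<in> ?A" and jet_a: "?jet a = (v, w)"
      using jet_mod_fixed_tail_surj[OF assms vw(2,3)] by blast
    show "vw \<in> ?jet ` ?A"
      unfolding vw(1) using jet_a[symmetric] a by (rule image_eqI)
  qed
  ultimately have image: "?jet ` ?A = ?F \<times> ?F"
    by (rule antisym)
  have "card ?A = p ^ (2 * p)"
    using card_coeff_vectors_fixed_tail[OF _ assms(2,3)] by simp
  also have "\<dots> = card (?F \<times> ?F)"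
    by (simp add: card_cartesian_product card_funcsetE power_add mult_2)
  finally have "inj_on ?jet ?A"
    by (intro eq_card_imp_inj_on) (simp_all add: image finite_coeff_vectors)
  with image show ?thesis
    by (simp add: bij_betw_def)
qed

lemma card_coeff_vectors_jet_mod_in:
  fixes p :: nat
  assumes "prime p" "2 * p \<le> Suc n"
    and "S \<subseteq> ({0..<int p} \<rightarrow>\<^sub>E {0..<int p}) \<times> ({0..<int p} \<rightarrow>\<^sub>E {0..<int p})"
  shows "card {a \<in> coeff_vectors n p. jet_mod p (poly_of_coeffs {..n} a) \<in> S}
           = card S * p ^ (Suc n - 2 * p)"
proof -
  let ?tail = "\<lambda>a. restrict a {2 * p..n}" and ?T = "{2 * p..n} \<rightarrow>\<^sub>E {0..<int p}"
  have "?tail ` coeff_vectors n p \<subseteq> ?T"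
    unfolding coeff_vectors_def by auto
  then have "card {a \<in> coeff_vectors n p. jet_mod p (poly_of_coeffs {..n} a) \<in> S}
      = (\<Sum>h\<in>?T. card {a \<in> coeff_vectors n p. ?tail a = h \<and> jet_mod p (poly_of_coeffs {..n} a) \<in> S})"
    by (intro card_filter_eq_sum_card_fibres finite_coeff_vectors) (simp_all add: finite_PiE)
  also have "\<dots> = (\<Sum>h\<in>?T. card S)"
  proof (rule sum.cong)
    fix h assume "h \<in> ?T"
    have "{a \<in> coeff_vectors n p. ?tail a = h \<and> jet_mod p (poly_of_coeffs {..n} a) \<in> S}
        = {a \<in> {a \<in> coeff_vectors n p. ?tail a = h}. jet_mod p (poly_of_coeffs {..n} a) \<in> S}"
      by blast
    then show "card {a \<in> coeff_vectors n p. ?tail a = h \<and> jet_mod p (poly_of_coeffs {..n} a) \<in> S} = card S"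
      using card_preimage_bij_betw[OF bij_betw_jet_mod_fixed_tail[OF assms(1,2) \<open>h \<in> ?T\<close>] assms(3)]
      by simp
  qed simp
  also have "\<dots> = card S * p ^ (Suc n - 2 * p)"
    by (simp add: card_funcsetE)
  finally show ?thesis .
qed

lemma N_p_eq: "M \<ge> 0 \<Longrightarrow> N_p n M = nat M ^ Suc n"
  by (simp add: N_p_def coeff_vectors_def card_funcsetE)

lemma N_pp_prime_power:
  fixes p d n :: nat
  assumes "prime p" "d \<ge> 2" "2 * p \<le> Suc n"
  shows "N_pp n (int p ^ d) = fact p * (p - 1) ^ p * p ^ (d * Suc n - 2 * p)"
proof -
  define jet_ok where "jet_ok a \<longleftrightarrow> jet_mod p (poly_of_coeffs {..n} a) \<in> perm_jets p" for a
  have p_pos: "int p > 0"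
    using prime_gt_0_nat[OF assms(1)] by simp
  have "N_pp n (int p ^ d) = card {a \<in> coeff_vectors n (int p ^ d). jet_ok a}"
    using assms(1,2) p_pos
    by (simp add: N_pp_def coeff_eval_eq_poly is_perm_poly_mod_prime_power_iff
        nonsingular_perm_poly_mod_iff_jet_mod jet_ok_def)
  also have "\<dots> = card {a \<in> coeff_vectors n (int p * int p ^ (d - 1)). jet_ok a}"
    using assms(2) by (simp flip: power_Suc)
  also have "\<dots> = card {a \<in> coeff_vectors n p. jet_ok a} * nat (int p ^ (d - 1)) ^ Suc n"
  proof (rule card_coeff_vectors_lift)
    fix a b :: "nat \<Rightarrow> int"
    assume "\<And>i. i \<le> n \<Longrightarrow> [a i = b i] (mod int p)"
    then have "[poly.coeff (poly_of_coeffs {..n} a) i = poly.coeff (poly_of_coeffs {..n} b) i] (mod int p)" for i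
      by (simp add: coeff_poly_of_coeffs)
    then have "jet_mod p (poly_of_coeffs {..n} a) = jet_mod p (poly_of_coeffs {..n} b)"
      by (rule jet_mod_cong_coeffs)
    then show "jet_ok a \<longleftrightarrow> jet_ok b"
      by (simp add: jet_ok_def)
  qed (use p_pos in simp_all)
  also have "card {a \<in> coeff_vectors n p. jet_ok a} = card (perm_jets p) * p ^ (Suc n - 2 * p)"
    unfolding jet_ok_def using assms(1,3) perm_jets_subset by (rule card_coeff_vectors_jet_mod_in)
  also have "card (perm_jets p) = fact p * (p - 1) ^ p"
    by (simp add: card_perm_jets)
  also have "nat (int p ^ (d - 1)) ^ Suc n = p ^ ((d - 1) * Suc n)"
    by (simp only: nat_power_eq[OF of_nat_0_le_iff] nat_int power_mult)
  also have "fact p * (p - 1) ^ p * p ^ (Suc n - 2 * p) * p ^ ((d - 1) * Suc n)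
      = fact p * (p - 1) ^ p * p ^ (Suc n - 2 * p + (d - 1) * Suc n)"
    by (simp add: power_add)
  also have "Suc n - 2 * p + (d - 1) * Suc n = d * Suc n - 2 * p"
  proof -
    have "d * Suc n = Suc n + (d - 1) * Suc n"
      using assms(2) by (cases d) simp_all
    then show ?thesis
      using assms(3) by linarith
  qed
  finally show ?thesis .
qed

theorem mainTheorem13:
  fixes p d n :: nat
  assumes "prime p" and "d \<ge> 2" and "n \<ge> 2 * p - 1"
  shows "real (N_pp n (int p ^ d)) / real (N_p n (int p ^ d))
           = real ((p - 1) ^ p * fact (p - 1)) / real (p ^ (2 * p - 1))"
proof -
  define D where "D = d * Suc n"
  have p_ge_2: "p \<ge> 2"
    using prime_ge_2_nat[OF assms(1)] .
  have "2 * p \<le> Suc n"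
    using assms(3) p_ge_2 by linarith
  with assms(1,2) have N_pp: "N_pp n (int p ^ d) = fact p * (p - 1) ^ p * p ^ (D - 2 * p)"
    unfolding D_def by (rule N_pp_prime_power)
  have "Suc n \<le> D"
    using mult_le_mono1[of 1 d "Suc n"] assms(2) unfolding D_def by simp
  then have "D = (D - 2 * p) + Suc (2 * p - 1)"
    using \<open>2 * p \<le> Suc n\<close> p_ge_2 by linarith
  then have "p ^ D = p ^ (D - 2 * p) * (p * p ^ (2 * p - 1))"
    by (metis power_add power_Suc)
  moreover have "N_p n (int p ^ d) = p ^ D"
    unfolding D_def power_mult
    by (simp only: N_p_eq[OF zero_le_power[OF of_nat_0_le_iff]] nat_power_eq[OF of_nat_0_le_iff] nat_int)
  ultimately have N_p: "N_p n (int p ^ d) = p ^ (D - 2 * p) * (p * p ^ (2 * p - 1))"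
    by simp
  have "fact p = p * fact (p - 1)"
    using p_ge_2 by (simp add: fact_reduce)
  then show ?thesis
    unfolding N_pp N_p using p_ge_2 by (simp add: field_simps)
qed

end
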